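(* Let $G=(V,E)$ be a directed graph with positive edge weights (channel fees), let $n\in V$, let $f_{max}\ge 1$, and let $\mathcal{CH}\subseteq E$ be a set of edges out of $n$ (previously selected channels), each $Ch\in\mathcal{CH}$ having fee $f(Ch)\in[1,f_{max}]$. Let $n_i\in V\setminus\{n\}$ be such that the edge $(n,n_i)$ is not in $\mathcal{CH}$, and for $x\in[1,f_{max}]$ let $G_i^{x}$ denote the graph obtained from $G$ by adding the edge $(n,n_i)$ with weight $x$. Define $$\mathsf{TotalER}(x)= x\cdot \mathrm{ebc}_{G_i^{x}}((n,n_i)) + \sum_{Ch\in\mathcal{CH}} f(Ch)\cdot \mathrm{ebc}_{G_i^{x}}(Ch).$$ Then $$\max_{x\in[1,f_{max}]} \mathsf{TotalER}(x) \;\ge\; \sum_{Ch\in\mathcal{CH}} f(Ch)\cdot \mathrm{ebc}_{G}(Ch),$$ i.e., the objective of the greedy channel selection (adding a channel to $\mathcal{CH}$ with its best fee) is monotone non-decreasing.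
   Context: Shortest paths are minimum-total-weight directed paths. In a weighted directed graph $H$, for vertices $s\neq t$, $\sigma_{st}$ denotes the number of shortest paths from $s$ to $t$, and for an edge $e$, $\sigma_{st[e]}$ denotes the number of those shortest paths containing $e$. The edge betweenness centrality is $\mathrm{ebc}_{H}(e)=\sum_{s\neq t,\ \sigma_{st}\neq 0} \frac{\sigma_{st[e]}}{\sigma_{st}}$. The quantity $f(Ch)\cdot\mathrm{ebc}(Ch)$ is the expected reward of channel $Ch$ in a payment channel network where payments follow cheapest paths. *)

theory Defs
  imports Complex_Main
begin

definition path_edges :: "'a list \<Rightarrow> ('a \<times> 'a) list" where
  "path_edges p = zip p (tl p)"

definition is_path :: "('a \<times> 'a) set \<Rightarrow> 'a \<Rightarrow> 'a \<Rightarrow> 'a list \<Rightarrow> bool" where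
  "is_path E s t p \<longleftrightarrow> p \<noteq> [] \<and> hd p = s \<and> last p = t \<and> distinct p
      \<and> set (path_edges p) \<subseteq> E"

definition path_weight :: "('a \<times> 'a \<Rightarrow> real) \<Rightarrow> 'a list \<Rightarrow> real" where
  "path_weight w p = sum_list (map w (path_edges p))"

definition shortest_paths ::
  "('a \<times> 'a) set \<Rightarrow> ('a \<times> 'a \<Rightarrow> real) \<Rightarrow> 'a \<Rightarrow> 'a \<Rightarrow> 'a list set" where
  "shortest_paths E w s t =
     {p. is_path E s t p \<and> (\<forall>q. is_path E s t q \<longrightarrow> path_weight w p \<le> path_weight w q)}"

definition sigma :: "('a \<times> 'a) set \<Rightarrow> ('a \<times> 'a \<Rightarrow> real) \<Rightarrow> 'a \<Rightarrow> 'a \<Rightarrow> nat" where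
  "sigma E w s t = card (shortest_paths E w s t)"

definition sigma_e ::
  "('a \<times> 'a) set \<Rightarrow> ('a \<times> 'a \<Rightarrow> real) \<Rightarrow> 'a \<Rightarrow> 'a \<Rightarrow> 'a \<times> 'a \<Rightarrow> nat" where
  "sigma_e E w s t e = card {p \<in> shortest_paths E w s t. e \<in> set (path_edges p)}"

definition ebc ::
  "'a set \<Rightarrow> ('a \<times> 'a) set \<Rightarrow> ('a \<times> 'a \<Rightarrow> real) \<Rightarrow> 'a \<times> 'a \<Rightarrow> real" where
  "ebc V E w e =
     (\<Sum>(s, t) \<in> {(s, t). s \<in> V \<and> t \<in> V \<and> s \<noteq> t \<and> sigma E w s t \<noteq> 0}.
        real (sigma_e E w s t e) / real (sigma E w s t))"

definition TotalER ::
  "'a set \<Rightarrow> ('a \<times> 'a) set \<Rightarrow> ('a \<times> 'a \<Rightarrow> real) \<Rightarrow> ('a \<times> 'a) set \<Rightarrow> 'a \<Rightarrow> 'a \<Rightarrow> real \<Rightarrow> real"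
  where
  "TotalER V E w CH n ni x =
     (let E' = insert (n, ni) E; w' = w((n, ni) := x) in
      x * ebc V E' w' (n, ni) + (\<Sum>Ch\<in>CH. w Ch * ebc V E' w' Ch))"

end

theory Submission
  imports Defs
begin

text \<open>Take the new fee x = fmax. Exchanging summations, the fee-weighted betweenness of a set
  C of channels is the sum, over the connected source-target pairs, of the average fee collected
  on C along the shortest paths of the pair. Adding the edge (n, ni) keeps connected pairs
  connected. For such a pair, either the new edge yields a strictly cheaper route, and then every
  new shortest path pays fmax on it, or the old shortest paths survive and are only joined by
  paths paying at least fmax. As the channels of CH all leave n, a simple path uses at most one
  of them, so an old shortest path pays at most fmax. Either way the average does not decrease,
  and newly connected pairs only add nonnegative terms.\<close>

lemma is_path_set_subset:
  assumes "is_path E s t p" "E \<subseteq> V \<times> V" "s \<in> V"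
  shows "set p \<subseteq> V"
proof
  fix v assume v: "v \<in> set p"
  have p: "p \<noteq> []" "hd p = s" "set (path_edges p) \<subseteq> E"
    using assms(1) by (auto simp: is_path_def)
  show "v \<in> V"
  proof (cases "v = hd p")
    case True
    then show ?thesis using p assms(3) by simp
  next
    case False
    then have "v \<in> set (tl p)" using v p(1) by (cases p) auto
    then obtain i where i: "i < length (tl p)" "tl p ! i = v" by (auto simp: in_set_conv_nth)
    then have "(p ! i, v) \<in> set (path_edges p)"
      unfolding path_edges_def set_zip by auto
    then show ?thesis using p(3) assms(2) by auto
  qed
qed

lemma finite_paths:
  assumes "finite V" "E \<subseteq> V \<times> V" "s \<in> V"
  shows "finite {p. is_path E s t p}"
proof (rule finite_subset[OF _ finite_subset_distinct[OF assms(1)]])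
  show "{p. is_path E s t p} \<subseteq> {xs. set xs \<subseteq> V \<and> distinct xs}"
    using is_path_set_subset[OF _ assms(2,3)] by (auto simp: is_path_def)
qed

lemma path_edges_same_source:
  assumes "distinct p" "e1 \<in> set (path_edges p)" "e2 \<in> set (path_edges p)" "fst e1 = fst e2"
  shows "e1 = e2"
proof -
  obtain i where i: "i < length (tl p)" "e1 = (p ! i, tl p ! i)"
    using assms(2) unfolding path_edges_def set_zip by auto
  obtain j where j: "j < length (tl p)" "e2 = (p ! j, tl p ! j)"
    using assms(3) unfolding path_edges_def set_zip by auto
  have "p ! i = p ! j" using i j assms(4) by simp
  then have "i = j" using assms(1) i(1) j(1) by (simp add: nth_eq_iff_index_eq)
  then show ?thesis using i j by simp
qed

lemma shortest_paths_nonempty: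
  assumes "finite {p. is_path E s t p}" "is_path E s t q"
  shows "shortest_paths E w s t \<noteq> {}"
proof -
  let ?P = "{p. is_path E s t p}"
  let ?p = "arg_min_on (path_weight w) ?P"
  have ne: "?P \<noteq> {}" using assms(2) by blast
  have "?p \<in> ?P" "\<And>q. q \<in> ?P \<Longrightarrow> path_weight w ?p \<le> path_weight w q"
    by (rule arg_min_if_finite(1)[OF assms(1) ne], rule arg_min_least[OF assms(1) ne])
  then have "?p \<in> shortest_paths E w s t"
    unfolding shortest_paths_def by blast
  then show ?thesis by blast
qed

lemma is_path_mono:
  assumes "is_path E s t p" "E \<subseteq> E'"
  shows "is_path E' s t p"
  using assms by (auto simp: is_path_def)

lemma is_path_insert_edge_iff:
  assumes "e \<notin> E"
  shows "is_path (insert e E) s t p \<and> e \<notin> set (path_edges p) \<longleftrightarrow> is_path E s t p"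
  using assms by (auto simp: is_path_def)

lemma path_weight_fun_upd:
  assumes "e \<notin> set (path_edges p)"
  shows "path_weight (w(e := x)) p = path_weight w p"
  unfolding path_weight_def using assms by (intro arg_cong[where f = sum_list] map_cong) auto

text \<open>Adding an edge either creates a strictly shorter path, and then every new shortest path
  uses it, or it does not, and then the old shortest paths are exactly the new ones avoiding it.\<close>

lemma shortest_paths_insert_edge_avoiding:
  assumes "e \<notin> E" "p0 \<in> shortest_paths E w s t"
  shows "{p \<in> shortest_paths (insert e E) (w(e := x)) s t. e \<notin> set (path_edges p)}
           \<in> {{}, shortest_paths E w s t}"
proof -
  let ?E' = "insert e E" and ?w' = "w(e := x)"
  have old_path: "is_path ?E' s t p \<and> path_weight ?w' p = path_weight w p"
    if "is_path E s t p" for p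
    using that is_path_insert_edge_iff[OF assms(1)] path_weight_fun_upd by metis
  have p0: "is_path E s t p0" "\<And>q. is_path E s t q \<Longrightarrow> path_weight w p0 \<le> path_weight w q"
    using assms(2) by (auto simp: shortest_paths_def)
  consider (shortcut) q where "is_path ?E' s t q" "path_weight ?w' q < path_weight w p0"
    | (no_shortcut) "\<And>q. is_path ?E' s t q \<Longrightarrow> path_weight w p0 \<le> path_weight ?w' q"
    by (meson not_le)
  then show ?thesis
  proof cases
    case shortcut
    have False if "p \<in> shortest_paths ?E' ?w' s t" "e \<notin> set (path_edges p)" for p
    proof -
      have "is_path E s t p" "path_weight ?w' p \<le> path_weight ?w' q"
        using that shortcut(1) is_path_insert_edge_iff[OF assms(1)]
        by (auto simp: shortest_paths_def)
      then show False using shortcut(2) p0(2) old_path by fastforce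
    qed
    then show ?thesis by blast
  next
    case no_shortcut
    have "p \<in> shortest_paths E w s t"
      if "p \<in> shortest_paths ?E' ?w' s t" "e \<notin> set (path_edges p)" for p
    proof -
      have p: "is_path E s t p" "path_weight ?w' p \<le> path_weight ?w' p0"
        using that old_path[OF p0(1)] is_path_insert_edge_iff[OF assms(1)]
        by (auto simp: shortest_paths_def)
      then show ?thesis using p0 old_path by (force simp: shortest_paths_def)
    qed
    moreover have "p \<in> shortest_paths ?E' ?w' s t \<and> e \<notin> set (path_edges p)"
      if "p \<in> shortest_paths E w s t" for p
    proof -
      have "is_path E s t p" "path_weight w p \<le> path_weight w p0"
        using that p0(1) by (auto simp: shortest_paths_def)
      then show ?thesis
        using no_shortcut old_path is_path_insert_edge_iff[OF assms(1)]
        by (force simp: shortest_paths_def)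
    qed
    ultimately show ?thesis by blast
  qed
qed

lemma sigma_insert_edge_ne_zero:
  assumes "finite V" "E \<subseteq> V \<times> V" "e \<in> V \<times> V" "s \<in> V" "sigma E w s t \<noteq> 0"
  shows "sigma (insert e E) (w(e := x)) s t \<noteq> 0"
proof -
  obtain p where "p \<in> shortest_paths E w s t"
    using assms(5) unfolding sigma_def by fastforce
  then have p: "is_path (insert e E) s t p"
    by (auto simp: shortest_paths_def intro: is_path_mono)
  have fin: "finite {p. is_path (insert e E) s t p}"
    using finite_paths[OF assms(1) _ assms(4)] assms(2,3) by simp
  have "shortest_paths (insert e E) (w(e := x)) s t \<noteq> {}"
    by (rule shortest_paths_nonempty[OF fin p])
  moreover have "finite (shortest_paths (insert e E) (w(e := x)) s t)"
    by (rule finite_subset[OF _ fin]) (auto simp: shortest_paths_def)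
  ultimately show ?thesis by (simp add: sigma_def)
qed

definition path_reward :: "('a \<times> 'a \<Rightarrow> real) \<Rightarrow> ('a \<times> 'a) set \<Rightarrow> 'a list \<Rightarrow> real" where
  "path_reward g C p = sum g (C \<inter> set (path_edges p))"

lemma path_reward_nonneg:
  assumes "\<forall>Ch\<in>C. 0 \<le> g Ch"
  shows "0 \<le> path_reward g C p"
  unfolding path_reward_def using assms by (auto intro: sum_nonneg)

lemma path_reward_ge:
  assumes "finite C" "e \<in> C" "e \<in> set (path_edges p)" "\<forall>Ch\<in>C. 0 \<le> g Ch"
  shows "g e \<le> path_reward g C p"
  unfolding path_reward_def using assms by (intro member_le_sum) auto

lemma path_reward_le_common_source:
  assumes "distinct p" "\<forall>Ch\<in>C. fst Ch = n" "\<forall>Ch\<in>C. g Ch \<le> x" "0 \<le> x"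
  shows "path_reward g C p \<le> x"
proof (cases "C \<inter> set (path_edges p) = {}")
  case True
  then show ?thesis using assms(4) by (simp add: path_reward_def)
next
  case False
  then obtain c where c: "c \<in> C \<inter> set (path_edges p)" by blast
  have "c' = c" if "c' \<in> C \<inter> set (path_edges p)" for c'
    using path_edges_same_source[OF assms(1), of c' c] that c assms(2) by auto
  then have "C \<inter> set (path_edges p) = {c}"
    using c by blast
  then have "path_reward g C p = g c" by (simp add: path_reward_def)
  then show ?thesis using c assms(3) by simp
qed

lemma path_reward_insert_avoiding:
  assumes "e \<notin> set (path_edges p)" "e \<notin> C"
  shows "path_reward (g(e := x)) (insert e C) p = path_reward g C p"
proof -
  have "insert e C \<inter> set (path_edges p) = C \<inter> set (path_edges p)"
    using assms(1) by blast
  moreover have "sum (g(e := x)) (C \<inter> set (path_edges p)) = sum g (C \<inter> set (path_edges p))"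
    using assms(2) by (intro sum.cong) auto
  ultimately show ?thesis
    unfolding path_reward_def by simp
qed

lemma average_le_bound:
  fixes f :: "'b \<Rightarrow> real"
  assumes "finite A" "A \<noteq> {}" "\<forall>a\<in>A. f a \<le> M"
  shows "sum f A / real (card A) \<le> M"
proof -
  have "0 < real (card A)" using assms(1,2) by (simp add: card_gt_0_iff)
  moreover have "sum f A \<le> real (card A) * M" using sum_bounded_above[of A f M] assms(3) by auto
  ultimately show ?thesis by (simp add: pos_divide_le_eq mult.commute)
qed

lemma bound_le_average:
  fixes f :: "'b \<Rightarrow> real"
  assumes "finite A" "A \<noteq> {}" "\<forall>a\<in>A. M \<le> f a"
  shows "M \<le> sum f A / real (card A)"
proof -
  have "0 < real (card A)" using assms(1,2) by (simp add: card_gt_0_iff)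
  moreover have "real (card A) * M \<le> sum f A" using sum_bounded_below[of A M f] assms(3) by auto
  ultimately show ?thesis by (simp add: pos_le_divide_eq mult.commute)
qed

lemma average_le_average_union:
  fixes f :: "'b \<Rightarrow> real"
  assumes "finite A" "finite B" "A \<noteq> {}" "A \<inter> B = {}"
    and "\<forall>a\<in>A. f a \<le> M" "\<forall>b\<in>B. M \<le> f b"
  shows "sum f A / real (card A) \<le> sum f (A \<union> B) / real (card (A \<union> B))"
proof -
  let ?a = "sum f A / real (card A)"
  have split: "real (card (A \<union> B)) * ?a = real (card A) * ?a + real (card B) * ?a"
    by (simp only: card_Un_disjoint[OF assms(1,2,4)] of_nat_add distrib_right)
  have A: "real (card A) * ?a = sum f A"
    using assms(1,3) by (simp add: card_gt_0_iff)
  have "real (card B) * ?a \<le> real (card B) * M"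
    using average_le_bound[OF assms(1,3,5)] by (rule mult_left_mono) simp
  also have "\<dots> \<le> sum f B"
    using sum_bounded_below[of B M f] assms(6) by simp
  finally have B: "real (card B) * ?a \<le> sum f B" .
  have bound: "real (card (A \<union> B)) * ?a \<le> sum f (A \<union> B)"
    using split A B sum.union_disjoint[OF assms(1,2,4), of f] by linarith
  have "0 < real (card (A \<union> B))"
    using assms(1-3) by (simp add: card_gt_0_iff)
  then show ?thesis
    using bound by (simp add: pos_le_divide_eq mult.commute)
qed

definition connected_pairs :: "'a set \<Rightarrow> ('a \<times> 'a) set \<Rightarrow> ('a \<times> 'a \<Rightarrow> real) \<Rightarrow> ('a \<times> 'a) set" where
  "connected_pairs V E w = {(s, t). s \<in> V \<and> t \<in> V \<and> s \<noteq> t \<and> sigma E w s t \<noteq> 0}"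

definition expected_pair_reward ::
  "('a \<times> 'a) set \<Rightarrow> ('a \<times> 'a \<Rightarrow> real) \<Rightarrow> ('a \<times> 'a \<Rightarrow> real) \<Rightarrow> ('a \<times> 'a) set \<Rightarrow> 'a \<Rightarrow> 'a \<Rightarrow> real"
  where
  "expected_pair_reward E w g C s t =
     (\<Sum>p\<in>shortest_paths E w s t. path_reward g C p) / real (sigma E w s t)"

lemma expected_pair_reward_nonneg:
  assumes "\<forall>Ch\<in>C. 0 \<le> g Ch"
  shows "0 \<le> expected_pair_reward E w g C s t"
  unfolding expected_pair_reward_def
  by (intro divide_nonneg_nonneg sum_nonneg path_reward_nonneg[OF assms]) simp

lemma sum_weighted_sigma_e:
  assumes "finite C" "finite (shortest_paths E w s t)"
  shows "(\<Sum>Ch\<in>C. g Ch * real (sigma_e E w s t Ch))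
           = (\<Sum>p\<in>shortest_paths E w s t. path_reward g C p)"
proof -
  let ?T = "shortest_paths E w s t"
  have "g Ch * real (sigma_e E w s t Ch) = (\<Sum>p\<in>?T. if Ch \<in> set (path_edges p) then g Ch else 0)"
    for Ch
    unfolding sigma_e_def using sum.inter_filter[OF assms(2), of "\<lambda>_. g Ch"]
    by (simp add: mult.commute)
  then have "(\<Sum>Ch\<in>C. g Ch * real (sigma_e E w s t Ch))
      = (\<Sum>Ch\<in>C. \<Sum>p\<in>?T. if Ch \<in> set (path_edges p) then g Ch else 0)"
    by simp
  also have "\<dots> = (\<Sum>p\<in>?T. \<Sum>Ch\<in>C. if Ch \<in> set (path_edges p) then g Ch else 0)"
    by (rule sum.swap)
  also have "\<dots> = (\<Sum>p\<in>?T. path_reward g C p)"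
    unfolding path_reward_def by (simp only: sum.inter_restrict[OF assms(1)])
  finally show ?thesis .
qed

lemma sum_weighted_ebc:
  assumes "finite C"
  shows "(\<Sum>Ch\<in>C. g Ch * ebc V E w Ch)
           = (\<Sum>(s, t)\<in>connected_pairs V E w. expected_pair_reward E w g C s t)"
proof -
  have "(\<Sum>Ch\<in>C. g Ch * ebc V E w Ch)
      = (\<Sum>(s, t)\<in>connected_pairs V E w. \<Sum>Ch\<in>C.
           g Ch * real (sigma_e E w s t Ch) / real (sigma E w s t))"
    unfolding ebc_def connected_pairs_def sum_distrib_left
    by (subst sum.swap) (simp add: case_prod_beta')
  also have "\<dots> = (\<Sum>(s, t)\<in>connected_pairs V E w. expected_pair_reward E w g C s t)"
  proof (intro sum.cong refl, clarify)
    fix s t assume "(s, t) \<in> connected_pairs V E w"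
    then have "finite (shortest_paths E w s t)"
      by (auto simp: connected_pairs_def sigma_def intro: card_ge_0_finite)
    then show "(\<Sum>Ch\<in>C. g Ch * real (sigma_e E w s t Ch) / real (sigma E w s t))
        = expected_pair_reward E w g C s t"
      unfolding expected_pair_reward_def
      by (simp add: sum_divide_distrib[symmetric] sum_weighted_sigma_e[OF assms])
  qed
  finally show ?thesis .
qed

lemma finite_connected_pairs:
  assumes "finite V"
  shows "finite (connected_pairs V E w)"
  by (rule finite_subset[of _ "V \<times> V"]) (use assms in \<open>auto simp: connected_pairs_def\<close>)

lemma connected_pairs_insert_edge:
  assumes "finite V" "E \<subseteq> V \<times> V" "e \<in> V \<times> V"
  shows "connected_pairs V E w \<subseteq> connected_pairs V (insert e E) (w(e := x))"
  using sigma_insert_edge_ne_zero[OF assms] by (auto simp: connected_pairs_def)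

lemma expected_pair_reward_le_insert_edge:
  fixes w :: "'a \<times> 'a \<Rightarrow> real"
  assumes "finite V" "E \<subseteq> V \<times> V" "e \<in> V \<times> V" "s \<in> V" "e \<notin> E" "e \<notin> C" "finite C"
    and "\<forall>Ch\<in>C. fst Ch = n" "\<forall>Ch\<in>C. w Ch \<in> {0..x}" "0 \<le> x" "sigma E w s t \<noteq> 0"
  shows "expected_pair_reward E w w C s t
           \<le> expected_pair_reward (insert e E) (w(e := x)) (w(e := x)) (insert e C) s t"
proof -
  let ?w' = "w(e := x)"
  let ?T = "shortest_paths E w s t" and ?T' = "shortest_paths (insert e E) ?w' s t"
  let ?r = "path_reward w C" and ?r' = "path_reward ?w' (insert e C)"
  have T: "finite ?T" "?T \<noteq> {}"
    using assms(11) by (auto simp: sigma_def intro: card_ge_0_finite)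
  have "sigma (insert e E) ?w' s t \<noteq> 0"
    by (rule sigma_insert_edge_ne_zero[OF assms(1-4,11)])
  then have T': "finite ?T'" "?T' \<noteq> {}"
    by (auto simp: sigma_def intro: card_ge_0_finite)
  have old_le: "\<forall>p\<in>?T. ?r p \<le> x"
    using path_reward_le_common_source[OF _ assms(8) _ assms(10)] assms(9)
    by (auto simp: shortest_paths_def is_path_def)
  have new_ge: "\<forall>p\<in>?T'. e \<in> set (path_edges p) \<longrightarrow> x \<le> ?r' p"
    using path_reward_ge[of "insert e C" e _ ?w'] assms(7,9,10) by auto
  have avoiding: "?r' p = ?r p" if "e \<notin> set (path_edges p)" for p
    using path_reward_insert_avoiding[OF that assms(6)] .
  have old_avoiding: "e \<notin> set (path_edges p)" if "p \<in> ?T" for p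
    using that assms(5) by (auto simp: shortest_paths_def is_path_def)
  have "sum ?r ?T / real (card ?T) \<le> sum ?r' ?T' / real (card ?T')"
  proof -
    obtain p0 where "p0 \<in> ?T" using T(2) by blast
    from shortest_paths_insert_edge_avoiding[OF assms(5) this]
    consider "{p \<in> ?T'. e \<notin> set (path_edges p)} = {}"
      | "{p \<in> ?T'. e \<notin> set (path_edges p)} = ?T"
      by blast
    then show ?thesis
    proof cases
      case 1
      then have "\<forall>p\<in>?T'. x \<le> ?r' p" using new_ge by blast
      then show ?thesis
        using average_le_bound[OF T old_le] bound_le_average[OF T'] by (meson order_trans)
    next
      case 2
      let ?N = "{p \<in> ?T'. e \<in> set (path_edges p)}"
      have split: "?T' = ?T \<union> ?N" and disjoint: "?T \<inter> ?N = {}"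
        using 2 by blast+
      have "sum ?r ?T = sum ?r' ?T"
        using avoiding old_avoiding by (intro sum.cong) auto
      moreover have "sum ?r' ?T / real (card ?T) \<le> sum ?r' (?T \<union> ?N) / real (card (?T \<union> ?N))"
        using average_le_average_union[OF T(1) _ T(2) disjoint, of ?r' x] T'(1) old_le new_ge
          avoiding old_avoiding by auto
      ultimately show ?thesis using split by simp
    qed
  qed
  then show ?thesis
    by (simp add: expected_pair_reward_def sigma_def)
qed

lemma TotalER_eq_sum_insert:
  assumes "finite CH" "(n, ni) \<notin> CH"
  shows "TotalER V E w CH n ni x
           = (\<Sum>Ch\<in>insert (n, ni) CH. (w((n, ni) := x)) Ch
                * ebc V (insert (n, ni) E) (w((n, ni) := x)) Ch)"
proof -
  let ?E' = "insert (n, ni) E" and ?w' = "w((n, ni) := x)"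
  have "(\<Sum>Ch\<in>CH. ?w' Ch * ebc V ?E' ?w' Ch) = (\<Sum>Ch\<in>CH. w Ch * ebc V ?E' ?w' Ch)"
    using assms(2) by (intro sum.cong) auto
  then show ?thesis
    using assms by (simp add: TotalER_def Let_def)
qed

theorem theorem4:
  fixes V :: "'a set" and E :: "('a \<times> 'a) set" and w :: "'a \<times> 'a \<Rightarrow> real"
    and n ni :: 'a and fmax :: real and CH :: "('a \<times> 'a) set"
  assumes "finite V"
    and "E \<subseteq> V \<times> V"
    and "\<forall>e\<in>E. w e > 0"
    and "n \<in> V"
    and "fmax \<ge> 1"
    and "CH \<subseteq> E"
    and "\<forall>Ch\<in>CH. fst Ch = n"
    and "\<forall>Ch\<in>CH. w Ch \<in> {1..fmax}"
    and "ni \<in> V - {n}"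
    and "(n, ni) \<notin> CH"
    and "(n, ni) \<notin> E"
  shows "\<exists>x\<in>{1..fmax}. TotalER V E w CH n ni x \<ge> (\<Sum>Ch\<in>CH. w Ch * ebc V E w Ch)"
proof (rule bexI[of _ fmax])
  let ?e = "(n, ni)" and ?E' = "insert (n, ni) E" and ?w' = "w((n, ni) := fmax)"
  have finite_CH: "finite CH"
    using assms(1,2,6) by (meson finite_SigmaI finite_subset)
  have e: "?e \<in> V \<times> V" using assms(4,9) by simp
  have fees: "\<forall>Ch\<in>CH. w Ch \<in> {0..fmax}" using assms(8) by auto
  have fees': "\<forall>Ch\<in>insert ?e CH. 0 \<le> ?w' Ch" using assms(5,8) by auto
  have "(\<Sum>Ch\<in>CH. w Ch * ebc V E w Ch)
      = (\<Sum>(s, t)\<in>connected_pairs V E w. expected_pair_reward E w w CH s t)"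
    by (rule sum_weighted_ebc[OF finite_CH])
  also have "\<dots> \<le> (\<Sum>(s, t)\<in>connected_pairs V E w. expected_pair_reward ?E' ?w' ?w' (insert ?e CH) s t)"
    using expected_pair_reward_le_insert_edge[OF assms(1,2) e _ assms(11,10) finite_CH assms(7) fees]
      assms(5) by (intro sum_mono) (auto simp: connected_pairs_def)
  also have "\<dots> \<le> (\<Sum>(s, t)\<in>connected_pairs V ?E' ?w'. expected_pair_reward ?E' ?w' ?w' (insert ?e CH) s t)"
    by (intro sum_mono2 finite_connected_pairs[OF assms(1)] connected_pairs_insert_edge[OF assms(1,2) e])
      (clarsimp intro!: expected_pair_reward_nonneg[OF fees'])
  also have "\<dots> = (\<Sum>Ch\<in>insert ?e CH. ?w' Ch * ebc V ?E' ?w' Ch)"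
    by (rule sum_weighted_ebc[symmetric]) (simp add: finite_CH)
  also have "\<dots> = TotalER V E w CH n ni fmax"
    by (rule TotalER_eq_sum_insert[symmetric, OF finite_CH assms(10)])
  finally show "TotalER V E w CH n ni fmax \<ge> (\<Sum>Ch\<in>CH. w Ch * ebc V E w Ch)" .
  show "fmax \<in> {1..fmax}" using assms(5) by simp
qed

end
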